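(* Let $k\ge 4$ and $n=2k-1$. Let $\eta=(\eta_1<\eta_2<\dots<\eta_l)\in\mathbb{D}_k\setminus\{(3,k-3)\}$, and let $Y_{2\eta^*}$ be the Young diagram whose main diagonal consists of exactly the cells $c_{1,1},\dots,c_{l+1,l+1}$ and which satisfies $h_{1,1}=2n-4$, $h_{i,i}=2\eta_{l-(i-2)}$ for $2\le i\le l+1$, and $a(c_{i,i})=l(c_{i,i})+1$ for $1\le i\le l+1$. Let $\lambda$ be the partition associated with $Y_{2\eta^*}$ (i.e. $\lambda=\mathbb{N}_0\setminus \mathrm{KN}^{-1}(Y_{2\eta^*})$, equivalently the set of hook lengths of the cells of the first column of $Y_{2\eta^*}$). Then $\lambda$ is unrefinable. In particular $\lambda\in\overline{\mathcal{U}}_{T_n}$.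
   Context: A partition of $N$ into distinct parts is a sequence $\lambda=(\lambda_1,\dots,\lambda_t)$ of positive integers with $\lambda_1<\dots<\lambda_t$, $\sum\lambda_i=N$ and $t\ge 2$; it is identified with its set of parts. $\mathbb{D}_N$ denotes the set of such partitions. The missing parts of $\lambda$ are $\mathcal{M}_\lambda=\{1,\dots,\lambda_t\}\setminus\{\lambda_1,\dots,\lambda_t\}$. $\lambda$ is refinable if there are two distinct missing parts $\mu<\mu'$ with $\mu+\mu'\in\lambda$, and unrefinable otherwise; $\mathcal{U}_N$ is the set of unrefinable partitions of $N$. An unrefinable partition of $N$ is maximal if its largest part equals the maximum of the largest parts of all elements of $\mathcal{U}_N$; $\widetilde{\mathcal{U}}_N$ is the set of these, and $\overline{\mathcal{U}}_N=\{\lambda\in\widetilde{\mathcal{U}}_N : \#\mathcal{M}_\lambda=\lfloor\lambda_t/2\rfloor\}$. $T_n=n(n+1)/2$. Young diagrams are in English convention: rows $R_1,R_2,\dots$ from top to bottom (weakly decreasing lengths), columns $C_1,C_2,\dots$ from left to right; $c_{i,j}$ is the cell in row $i$ and column $j$. The arm $a(c_{i,j})$ is the number of cells to the right of $c_{i,j}$ in its row, the leg $l(c_{i,j})$ the number of cells below it in its column, and the hook length is $h_{i,j}=a(c_{i,j})+l(c_{i,j})+1$. The main diagonal consists of the cells $c_{i,i}$. A numerical set is a set $S\subseteq\mathbb{N}_0$ with $0\in S$ and finite complement. The Keith–Nath (KN) transformation sends $S$ to the Young diagram $\mathrm{KN}(S)$ whose boundary is the lattice path that, starting from the origin, takes for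 $j=0,1,\dots,\max(\mathbb{N}_0\setminus S)$ an east step if $j\in S$ and a north step if $j\notin S$; this is a bijection between numerical sets and Young diagrams, and the hook lengths of the first-column cells of $\mathrm{KN}(S)$ are exactly the elements of $\mathbb{N}_0\setminus S$. *)

theory Defs
  imports Main
begin

(* Partitions into distinct parts are represented by their (finite) set of parts. *)
definition distinct_partitions :: "nat \<Rightarrow> nat set set" where
  "distinct_partitions N = {lam. finite lam \<and> 0 \<notin> lam \<and> card lam \<ge> 2 \<and> \<Sum>lam = N}"

definition missing_parts :: "nat set \<Rightarrow> nat set" where
  "missing_parts lam = {1..Max lam} - lam"

definition refinable :: "nat set \<Rightarrow> bool" where
  "refinable lam \<longleftrightarrow> (\<exists>\<mu>\<in>missing_parts lam. \<exists>\<mu>'\<in>missing_parts lam. \<mu> < \<mu>' \<and> \<mu> + \<mu>' \<in> lam)"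

definition unrefinable_partitions :: "nat \<Rightarrow> nat set set" where
  "unrefinable_partitions N = {lam \<in> distinct_partitions N. \<not> refinable lam}"

definition maximal_unrefinable :: "nat \<Rightarrow> nat set set" where
  "maximal_unrefinable N = {lam \<in> unrefinable_partitions N.
      Max lam = Max (Max ` unrefinable_partitions N)}"

definition maximal_unrefinable_bar :: "nat \<Rightarrow> nat set set" where
  "maximal_unrefinable_bar N = {lam \<in> maximal_unrefinable N.
      card (missing_parts lam) = Max lam div 2}"

definition tri :: "nat \<Rightarrow> nat" where
  "tri n = n * (n + 1) div 2"

(* Young diagrams (English convention), as finite sets of cells (i,j), i = row, j = column,
   1-indexed, closed under moving up and to the left. *)
definition young_diagram :: "(nat \<times> nat) set \<Rightarrow> bool" where
  "young_diagram Y \<longleftrightarrow> finite Y \<and> (\<forall>(i,j)\<in>Y. 1 \<le> i \<and> 1 \<le> j) \<and>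
     (\<forall>i j i' j'. (i,j) \<in> Y \<and> 1 \<le> i' \<and> i' \<le> i \<and> 1 \<le> j' \<and> j' \<le> j \<longrightarrow> (i',j') \<in> Y)"

definition arm :: "(nat \<times> nat) set \<Rightarrow> nat \<Rightarrow> nat \<Rightarrow> nat" where
  "arm Y i j = card {j'. j < j' \<and> (i,j') \<in> Y}"

definition leg :: "(nat \<times> nat) set \<Rightarrow> nat \<Rightarrow> nat \<Rightarrow> nat" where
  "leg Y i j = card {i'. i < i' \<and> (i',j) \<in> Y}"

definition hook :: "(nat \<times> nat) set \<Rightarrow> nat \<Rightarrow> nat \<Rightarrow> nat" where
  "hook Y i j = arm Y i j + leg Y i j + 1"

(* The partition associated with Y: the hook lengths of the first-column cells
   (= complement of the numerical set KN^{-1}(Y)). *)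
definition first_column_hooks :: "(nat \<times> nat) set \<Rightarrow> nat set" where
  "first_column_hooks Y = {hook Y i 1 | i. (i,1) \<in> Y}"

end

theory Submission
  imports Defs
begin

(* The hypotheses say that Y has Frobenius coordinates (a_1, ..., a_d | a_1 - 1, ..., a_d - 1),
   where a_i is the arm of c_{i,i}, {a_1, ..., a_d} = {c} union eta and c = a_1 = 2k - 3.  The
   first-column hook lengths of such a diagram are the numbers c + a_i together with c - x for
   the x in {1..c} that are not arms, so
     lambda = {2c} union (c + eta) union {c - x | 0 < x < c, x not in eta}.
   It has largest part 2c = 2n - 4, exactly c parts (hence c missing parts) and sum T_n.  If two
   missing parts added up to a part, unwinding this description would give distinct parts of eta
   adding up to more than k, or parts e, e' with 2e + e' = 2k - 3, which forces eta = {3, k - 3}.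
   Finally, an unrefinable partition of T_n with largest part m contains mu or m - mu for every
   mu < m/2; for m > 2n - 4 these parts alone leave a slack of at most 2 below T_n, and a parity
   count shows that the slack cannot be filled. *)

section \<open>Young diagrams and Frobenius coordinates\<close>

definition row_length :: "(nat \<times> nat) set \<Rightarrow> nat \<Rightarrow> nat" where
  "row_length Y i = card {j. (i,j) \<in> Y}"

definition col_length :: "(nat \<times> nat) set \<Rightarrow> nat \<Rightarrow> nat" where
  "col_length Y j = card {i. (i,j) \<in> Y}"

lemma finite_down_closed_eq_atLeastAtMost:
  fixes S :: "nat set"
  assumes "finite S" "0 \<notin> S" "\<And>x y. y \<in> S \<Longrightarrow> 1 \<le> x \<Longrightarrow> x \<le> y \<Longrightarrow> x \<in> S"
  shows "S = {1..card S}"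
proof (cases "S = {}")
  case False
  have "Max S \<in> S"
    using assms(1) False by simp
  have "S = {1..Max S}"
  proof (intro set_eqI iffI)
    fix x assume "x \<in> S"
    then show "x \<in> {1..Max S}"
      using assms(1,2) Max_ge[of S x] by (cases x) auto
  next
    fix x assume "x \<in> {1..Max S}"
    then show "x \<in> S"
      using assms(3) \<open>Max S \<in> S\<close> by simp
  qed
  then show ?thesis
    by (metis card_atLeastAtMost diff_Suc_1)
qed simp

lemma young_diagram_closed:
  assumes "young_diagram Y" "(i,j) \<in> Y" "1 \<le> i'" "i' \<le> i" "1 \<le> j'" "j' \<le> j"
  shows "(i',j') \<in> Y"
  using assms unfolding young_diagram_def by blast

lemma young_diagram_row_iff:
  assumes Y: "young_diagram Y" and i: "1 \<le> i"
  shows "(i,j) \<in> Y \<longleftrightarrow> 1 \<le> j \<and> j \<le> row_length Y i"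
proof -
  have "{j. (i,j) \<in> Y} \<subseteq> snd ` Y"
    by force
  then have "finite {j. (i,j) \<in> Y}"
    using Y finite_subset unfolding young_diagram_def by blast
  moreover have "0 \<notin> {j. (i,j) \<in> Y}"
    using Y unfolding young_diagram_def by fastforce
  moreover have "j' \<in> {j. (i,j) \<in> Y}" if "j \<in> {j. (i,j) \<in> Y}" "1 \<le> j'" "j' \<le> j" for j j'
    using Y i that unfolding young_diagram_def by blast
  ultimately have "{j. (i,j) \<in> Y} = {1..row_length Y i}"
    unfolding row_length_def by (rule finite_down_closed_eq_atLeastAtMost)
  then show ?thesis
    by (simp add: set_eq_iff)
qed

lemma young_diagram_col_iff:
  assumes Y: "young_diagram Y" and j: "1 \<le> j"
  shows "(i,j) \<in> Y \<longleftrightarrow> 1 \<le> i \<and> i \<le> col_length Y j"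
proof -
  have "{i. (i,j) \<in> Y} \<subseteq> fst ` Y"
    by force
  then have "finite {i. (i,j) \<in> Y}"
    using Y finite_subset unfolding young_diagram_def by blast
  moreover have "0 \<notin> {i. (i,j) \<in> Y}"
    using Y unfolding young_diagram_def by fastforce
  moreover have "i' \<in> {i. (i,j) \<in> Y}" if "i \<in> {i. (i,j) \<in> Y}" "1 \<le> i'" "i' \<le> i" for i i'
    using Y j that unfolding young_diagram_def by blast
  ultimately have "{i. (i,j) \<in> Y} = {1..col_length Y j}"
    unfolding col_length_def by (rule finite_down_closed_eq_atLeastAtMost)
  then show ?thesis
    by (simp add: set_eq_iff)
qed

lemma arm_eq:
  assumes "young_diagram Y" "1 \<le> i"
  shows "arm Y i j = row_length Y i - j"
proof -
  have "{j'. j < j' \<and> (i,j') \<in> Y} = {j<..row_length Y i}"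
    by (simp add: set_eq_iff young_diagram_row_iff[OF assms]) linarith
  then show ?thesis
    unfolding arm_def by simp
qed

lemma leg_eq:
  assumes "young_diagram Y" "1 \<le> j"
  shows "leg Y i j = col_length Y j - i"
proof -
  have "{i'. i < i' \<and> (i',j) \<in> Y} = {i<..col_length Y j}"
    by (simp add: set_eq_iff young_diagram_col_iff[OF assms]) linarith
  then show ?thesis
    unfolding leg_def by simp
qed

lemma row_length_antimono:
  assumes Y: "young_diagram Y" and "1 \<le> i" "i \<le> i'"
  shows "row_length Y i' \<le> row_length Y i"
proof (cases "row_length Y i' = 0")
  case False
  then have "(i', row_length Y i') \<in> Y"
    using young_diagram_row_iff[OF Y] assms by simp
  then have "(i, row_length Y i') \<in> Y"
    using young_diagram_closed[OF Y] assms False by simp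
  then show ?thesis
    using young_diagram_row_iff[OF Y] assms by simp
qed simp

lemma col_length_antimono:
  assumes Y: "young_diagram Y" and "1 \<le> j" "j \<le> j'"
  shows "col_length Y j' \<le> col_length Y j"
proof (cases "col_length Y j' = 0")
  case False
  then have "(col_length Y j', j') \<in> Y"
    using young_diagram_col_iff[OF Y] assms by simp
  then have "(col_length Y j', j) \<in> Y"
    using young_diagram_closed[OF Y] assms False by simp
  then show ?thesis
    using young_diagram_col_iff[OF Y] assms by simp
qed simp

text \<open>The hook length of the cell (i,j) computed from row and column lengths is positive
  inside the diagram and negative outside of it.\<close>
lemma row_length_add_col_length_neq:
  assumes Y: "young_diagram Y" and "1 \<le> i" "1 \<le> j"
  shows "row_length Y i + col_length Y j \<noteq> i + j - 1"
  using young_diagram_row_iff[OF Y, of i j] young_diagram_col_iff[OF Y, of j i] assms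
  by (cases "(i,j) \<in> Y") auto

lemma row_length_le_Durfee:
  assumes Y: "young_diagram Y" and diag: "\<forall>i\<ge>1. (i,i) \<in> Y \<longleftrightarrow> i \<le> d"
    and "d < i"
  shows "row_length Y i \<le> d"
proof (rule ccontr)
  assume "\<not> row_length Y i \<le> d"
  then have "(i, d + 1) \<in> Y"
    using young_diagram_row_iff[OF Y] assms(3) by simp
  then have "(d + 1, d + 1) \<in> Y"
    using young_diagram_closed[OF Y] assms(3) by simp
  then show False
    using diag by auto
qed

lemma inj_on_row_offsets:
  assumes Y: "young_diagram Y" and diag: "\<forall>i\<ge>1. (i,i) \<in> Y \<longleftrightarrow> i \<le> d"
  shows "inj_on (\<lambda>i. i - row_length Y i) {d<..}"
proof (rule linorder_inj_onI')
  fix i i' assume "i \<in> {d<..}" "i' \<in> {d<..}" "i < i'"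
  then show "i - row_length Y i \<noteq> i' - row_length Y i'"
    using row_length_antimono[OF Y, of i i'] row_length_le_Durfee[OF Y diag, of i] by auto
qed

lemma inj_on_diagonal_legs:
  assumes Y: "young_diagram Y" and diag: "\<forall>i\<ge>1. (i,i) \<in> Y \<longleftrightarrow> i \<le> d"
  shows "inj_on (\<lambda>j. leg Y j j + 1) {1..d}"
proof (rule linorder_inj_onI')
  fix j j' assume j: "j \<in> {1..d}" "j' \<in> {1..d}" "j < j'"
  then have "j' \<le> col_length Y j'"
    using diag young_diagram_col_iff[OF Y, of j' j'] by simp
  then show "leg Y j j + 1 \<noteq> leg Y j' j' + 1"
    using col_length_antimono[OF Y, of j j'] leg_eq[OF Y] j by auto
qed

lemma row_offsets_eq_complement_diagonal_legs:
  assumes Y: "young_diagram Y" and diag: "\<forall>i\<ge>1. (i,i) \<in> Y \<longleftrightarrow> i \<le> d"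
    and L: "L = col_length Y 1"
  shows "(\<lambda>i. i - row_length Y i) ` {d<..L} = {1..L} - (\<lambda>j. leg Y j j + 1) ` {1..d}"
proof (rule card_subset_eq)
  have diag_col: "j \<le> col_length Y j" if "1 \<le> j" "j \<le> d" for j
    using that diag young_diagram_col_iff[OF Y, of j j] by simp
  have legs: "leg Y j j + 1 = col_length Y j + 1 - j" if "1 \<le> j" "j \<le> d" for j
    using diag_col[OF that] leg_eq[OF Y, of j j] that by simp
  show "finite ({1..L} - (\<lambda>j. leg Y j j + 1) ` {1..d})"
    by simp
  show "(\<lambda>i. i - row_length Y i) ` {d<..L} \<subseteq> {1..L} - (\<lambda>j. leg Y j j + 1) ` {1..d}"
  proof
    fix x assume "x \<in> (\<lambda>i. i - row_length Y i) ` {d<..L}"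
    then obtain i where i: "i \<in> {d<..L}" and x: "x = i - row_length Y i"
      by blast
    have rl: "row_length Y i \<le> d"
      using row_length_le_Durfee[OF Y diag] i by simp
    have "x \<notin> (\<lambda>j. leg Y j j + 1) ` {1..d}"
    proof
      assume "x \<in> (\<lambda>j. leg Y j j + 1) ` {1..d}"
      then obtain j where j: "j \<in> {1..d}" "x = leg Y j j + 1"
        by blast
      then have "row_length Y i + col_length Y j = i + j - 1"
        using legs[of j] diag_col[of j] rl i x by auto
      then show False
        using row_length_add_col_length_neq[OF Y, of i j] i j by auto
    qed
    then show "x \<in> {1..L} - (\<lambda>j. leg Y j j + 1) ` {1..d}"
      using rl i x by auto
  qed
  have "card ((\<lambda>i. i - row_length Y i) ` {d<..L}) = L - d"
    using inj_on_subset[OF inj_on_row_offsets[OF Y diag], of "{d<..L}"]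
    by (simp add: card_image subset_iff)
  moreover note inj_on_diagonal_legs[OF Y diag]
  moreover have "(\<lambda>j. leg Y j j + 1) ` {1..d} \<subseteq> {1..L}"
    using legs diag_col col_length_antimono[OF Y, of 1] L by force
  ultimately show "card ((\<lambda>i. i - row_length Y i) ` {d<..L}) =
      card ({1..L} - (\<lambda>j. leg Y j j + 1) ` {1..d})"
    by (simp add: card_Diff_subset card_image)
qed

lemma first_column_hooks_Frobenius:
  assumes Y: "young_diagram Y" and diag: "\<forall>i\<ge>1. (i,i) \<in> Y \<longleftrightarrow> i \<le> d"
    and d: "1 \<le> d" and L: "L = leg Y 1 1 + 1"
  shows "first_column_hooks Y =
    (\<lambda>i. L + arm Y i i) ` {1..d} \<union> (\<lambda>x. L - x) ` ({1..L} - (\<lambda>i. leg Y i i + 1) ` {1..d})"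
proof -
  have "(d, d) \<in> Y"
    using diag d by simp
  then have "(1, 1) \<in> Y" "(d, 1) \<in> Y"
    using young_diagram_closed[OF Y] d by simp_all
  then have L_col: "L = col_length Y 1" and dL: "d \<le> L"
    using young_diagram_col_iff[OF Y, of 1] leg_eq[OF Y, of 1 1] L by auto
  have hook: "hook Y i 1 = row_length Y i + L - i" if "1 \<le> i" "i \<le> L" for i
    using that young_diagram_row_iff[OF Y, of i 1] young_diagram_col_iff[OF Y, of 1 i]
      arm_eq[OF Y, of i 1] leg_eq[OF Y, of 1 i] L_col unfolding hook_def by simp
  have "first_column_hooks Y = (\<lambda>i. row_length Y i + L - i) ` {1..L}"
    using young_diagram_col_iff[OF Y, of 1] L_col hook
    unfolding first_column_hooks_def by force
  also have "\<dots> = (\<lambda>i. row_length Y i + L - i) ` {1..d} \<union> (\<lambda>i. row_length Y i + L - i) ` {d<..L}"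
    using dL by (auto simp flip: image_Un intro!: arg_cong[where f = "image _"])
  also have "(\<lambda>i. row_length Y i + L - i) ` {1..d} = (\<lambda>i. L + arm Y i i) ` {1..d}"
    using diag young_diagram_row_iff[OF Y] arm_eq[OF Y] by (intro image_cong) auto
  also have "(\<lambda>i. row_length Y i + L - i) ` {d<..L} = (\<lambda>x. L - x) ` (\<lambda>i. i - row_length Y i) ` {d<..L}"
  proof (unfold image_image, intro image_cong refl)
    fix i assume "i \<in> {d<..L}"
    then have "row_length Y i \<le> i"
      using row_length_le_Durfee[OF Y diag, of i] by simp
    then show "row_length Y i + L - i = L - (i - row_length Y i)"
      using \<open>i \<in> {d<..L}\<close> by simp
  qed
  finally show ?thesis
    unfolding row_offsets_eq_complement_diagonal_legs[OF Y diag L_col] .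
qed

context
  fixes E :: "nat set" and k :: nat
  assumes E: "E \<in> distinct_partitions k"
begin

lemma distinct_partition_pos:
  assumes "e \<in> E"
  shows "0 < e"
proof -
  have "0 \<notin> E"
    using E unfolding distinct_partitions_def by simp
  then show ?thesis
    using assms by (cases e) auto
qed

lemma sum_subset_le_distinct_partition: "F \<subseteq> E \<Longrightarrow> \<Sum>F \<le> k"
  using E sum_mono2[of E F "\<lambda>x. x"] unfolding distinct_partitions_def by simp

lemma add_le_distinct_partition: "e \<in> E \<Longrightarrow> e' \<in> E \<Longrightarrow> e \<noteq> e' \<Longrightarrow> e + e' \<le> k"
  using sum_subset_le_distinct_partition[of "{e, e'}"] by simp

lemma add3_le_distinct_partition:
  "e \<in> E \<Longrightarrow> e' \<in> E \<Longrightarrow> e'' \<in> E \<Longrightarrow> e \<noteq> e' \<Longrightarrow> e \<noteq> e'' \<Longrightarrow> e' \<noteq> e'' \<Longrightarrow>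
    e + e' + e'' \<le> k"
  using sum_subset_le_distinct_partition[of "{e, e', e''}"] by simp

lemma distinct_partition_other_part:
  assumes "e \<in> E"
  obtains e' where "e' \<in> E" "e' \<noteq> e"
proof -
  have "1 \<le> card (E - {e})"
    using E assms unfolding distinct_partitions_def by (auto simp: card_Diff_singleton)
  then obtain e' where "e' \<in> E - {e}"
    by (metis all_not_in_conv card.empty not_one_le_zero)
  then show ?thesis
    using that by blast
qed

lemma part_lt_distinct_partition:
  assumes "e \<in> E"
  shows "e < k"
proof -
  obtain e' where "e' \<in> E" "e' \<noteq> e"
    using distinct_partition_other_part[OF assms] .
  then show ?thesis
    using add_le_distinct_partition[OF assms, of e'] distinct_partition_pos[of e'] by simp
qed

lemma pred_mem_imp_one_mem_distinct_partition:
  assumes "k - 1 \<in> E"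
  shows "1 \<in> E"
proof -
  obtain e where "e \<in> E" "e \<noteq> k - 1"
    using distinct_partition_other_part[OF assms] .
  moreover have "0 < k - 1"
    using assms part_lt_distinct_partition distinct_partition_pos by fastforce
  ultimately have "e = 1"
    using add_le_distinct_partition[of e "k - 1"] distinct_partition_pos[of e] assms by auto
  with \<open>e \<in> E\<close> show ?thesis
    by simp
qed

lemma double_add_eq_imp_eq_3_k_minus_3:
  assumes "4 \<le> k" "e \<in> E" "e' \<in> E" "e \<noteq> e'" and sum: "2 * e + e' = 2 * k - 3"
  shows "E = {3, k - 3}"
proof -
  define R where "R = E - {e, e'}"
  have "\<Sum>E = \<Sum>R + \<Sum>{e, e'}"
    using E assms(2,3) unfolding R_def distinct_partitions_def by (intro sum.subset_diff) auto
  then have "\<Sum>R + (e + e') = k"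
    using E assms(4) unfolding distinct_partitions_def by simp
  then have R: "e' + 2 * \<Sum>R = 3"
    using sum assms(1) by linarith
  have "R = {}"
  proof (rule ccontr)
    assume "R \<noteq> {}"
    then obtain x where x: "x \<in> R"
      by blast
    then have "x \<le> \<Sum>R"
      using E unfolding R_def distinct_partitions_def by (intro member_le_sum) auto
    then have "x = 1" "e' = 1"
      using R x distinct_partition_pos[of x] distinct_partition_pos[OF assms(3)] unfolding R_def
      by auto
    then show False
      using x unfolding R_def by simp
  qed
  then have "E = {e, e'}"
    using assms(2,3) unfolding R_def by auto
  moreover have "e' = 3"
    using R \<open>R = {}\<close> by simp
  moreover have "e = k - 3"
    using sum \<open>e' = 3\<close> by simp
  ultimately show ?thesis
    by blast
qed

end

lemma finite_distinct_partitions: "finite (distinct_partitions N)"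
proof (rule finite_subset)
  show "distinct_partitions N \<subseteq> Pow {0..N}"
    unfolding distinct_partitions_def by (auto intro: member_le_sum)
qed simp

section \<open>Largest parts of unrefinable partitions of triangular numbers\<close>

lemma not_refinable_mem_or_complement_mem:
  assumes "\<not> refinable lam" "finite lam" "lam \<noteq> {}" "0 < \<mu>" "2 * \<mu> < Max lam"
  shows "\<mu> \<in> lam \<or> Max lam - \<mu> \<in> lam"
proof (rule ccontr)
  assume "\<not> (\<mu> \<in> lam \<or> Max lam - \<mu> \<in> lam)"
  then have "\<mu> \<in> missing_parts lam" "Max lam - \<mu> \<in> missing_parts lam"
    using assms(4,5) unfolding missing_parts_def by auto
  moreover have "\<mu> < Max lam - \<mu>" "\<mu> + (Max lam - \<mu>) \<in> lam"
    using assms(2,3,5) by auto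
  ultimately show False
    using assms(1) unfolding refinable_def by blast
qed

lemma sum_eq_complementary_pairs:
  fixes lam :: "nat set"
  assumes fin: "finite lam" and "0 \<notin> lam" "lam \<noteq> {}" and m: "m = Max lam"
  shows "\<Sum>lam = m + \<Sum>(lam \<inter> {x. 2 * x = m}) +
    (\<Sum>\<mu> = 1..(m - 1) div 2. (if \<mu> \<in> lam then \<mu> else 0) + (if m - \<mu> \<in> lam then m - \<mu> else 0))"
proof -
  define s where "s = (m - 1) div 2"
  have m_mem: "m \<in> lam" and le_m: "\<And>x. x \<in> lam \<Longrightarrow> x \<le> m"
    using assms by auto
  have "m \<noteq> 0"
    using m_mem assms(2) by (cases m) auto
  then have s: "2 * s < m" "m \<le> 2 * s + 2"
    unfolding s_def by presburger+
  define P where "P = lam \<inter> {x. 2 * x = m}"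
  define Q where "Q = lam \<inter> {1..s}"
  define R where "R = lam \<inter> {m - s..<m}"
  have split: "lam = insert m (P \<union> Q \<union> R)"
  proof (intro set_eqI iffI)
    fix x assume x: "x \<in> lam"
    have "x \<noteq> 0"
      using x assms(2) by (cases x) auto
    moreover have "x \<le> m"
      using le_m[OF x] .
    moreover have "x \<le> s \<or> 2 * x = m \<or> m - s \<le> x"
      using s by arith
    ultimately show "x \<in> insert m (P \<union> Q \<union> R)"
      using x unfolding P_def Q_def R_def by auto
  qed (use m_mem in \<open>auto simp: P_def Q_def R_def\<close>)
  have "m \<notin> P \<union> Q \<union> R" "P \<inter> Q = {}" "(P \<union> Q) \<inter> R = {}"
    using s \<open>m \<noteq> 0\<close> unfolding P_def Q_def R_def by auto
  then have "\<Sum>lam = m + \<Sum>P + \<Sum>Q + \<Sum>R"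
    using fin by (subst split) (simp add: P_def Q_def R_def sum.union_disjoint)
  also have "\<Sum>Q = (\<Sum>\<mu> = 1..s. if \<mu> \<in> lam then \<mu> else 0)"
    unfolding Q_def using sum.inter_restrict[of "{1..s}" "\<lambda>x. x" lam] by (simp add: Int_commute)
  also have "\<Sum>R = (\<Sum>x = m - s..<m. if x \<in> lam then x else 0)"
    unfolding R_def using sum.inter_restrict[of "{m - s..<m}" "\<lambda>x. x" lam] by (simp add: Int_commute)
  also have "\<dots> = (\<Sum>\<mu> = 1..s. if m - \<mu> \<in> lam then m - \<mu> else 0)"
    using s
    by (intro sum.reindex_bij_witness[where i = "\<lambda>\<mu>. m - \<mu>" and j = "\<lambda>x. m - x"]) auto
  finally show ?thesis
    unfolding s_def P_def by (simp add: sum.distrib)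
qed

text \<open>Here e is the contribution of the middle part m/2, and d \<mu> is what the parts among
  \<mu> and m - \<mu> contribute beyond \<mu>.\<close>
lemma not_refinable_pair_decomposition:
  fixes lam :: "nat set"
  assumes nr: "\<not> refinable lam" and fin: "finite lam" and zero: "0 \<notin> lam" and ne: "lam \<noteq> {}"
    and m: "m = Max lam"
  obtains e d where "\<Sum>lam = m + e + (\<Sum>\<mu> = 1..(m - 1) div 2. \<mu> + d \<mu>)"
    and "e = 0 \<or> 2 * e = m"
    and "\<And>\<mu>. \<mu> \<in> {1..(m - 1) div 2} \<Longrightarrow> d \<mu> = 0 \<or> d \<mu> = m - 2 * \<mu> \<or> d \<mu> = m - \<mu>"
proof -
  define g where "g \<mu> = (if \<mu> \<in> lam then \<mu> else 0) + (if m - \<mu> \<in> lam then m - \<mu> else 0)" for \<mu>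
  have "m \<in> lam"
    using fin ne m by simp
  then have "2 * ((m - 1) div 2) < m"
    using zero by (cases m) auto
  have pair: "g \<mu> = \<mu> + (g \<mu> - \<mu>) \<and>
      (g \<mu> - \<mu> = 0 \<or> g \<mu> - \<mu> = m - 2 * \<mu> \<or> g \<mu> - \<mu> = m - \<mu>)"
    if "\<mu> \<in> {1..(m - 1) div 2}" for \<mu>
  proof -
    have "0 < \<mu>" "2 * \<mu> < m"
      using that \<open>2 * ((m - 1) div 2) < m\<close> by auto
    then have "\<mu> \<in> lam \<or> m - \<mu> \<in> lam"
      using not_refinable_mem_or_complement_mem[OF nr fin ne] m by blast
    then show ?thesis
      using \<open>2 * \<mu> < m\<close> unfolding g_def by (cases "\<mu> \<in> lam"; cases "m - \<mu> \<in> lam") auto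
  qed
  have "lam \<inter> {x. 2 * x = m} \<subseteq> {m div 2}"
    by auto
  then have "lam \<inter> {x. 2 * x = m} = {} \<or> lam \<inter> {x. 2 * x = m} = {m div 2}"
    by (rule subset_singletonD)
  then have "\<Sum>(lam \<inter> {x. 2 * x = m}) = 0 \<or> 2 * \<Sum>(lam \<inter> {x. 2 * x = m}) = m"
  proof (elim disjE)
    assume half: "lam \<inter> {x. 2 * x = m} = {m div 2}"
    then have "2 * (m div 2) = m"
      by blast
    with half show ?thesis
      by simp
  qed simp
  moreover have "\<Sum>lam = m + \<Sum>(lam \<inter> {x. 2 * x = m}) + (\<Sum>\<mu> = 1..(m - 1) div 2. \<mu> + (g \<mu> - \<mu>))"
    using sum_eq_complementary_pairs[OF fin zero ne m] pair unfolding g_def[symmetric] by simp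
  ultimately show ?thesis
    using pair by (intro that[of "\<Sum>(lam \<inter> {x. 2 * x = m})" "\<lambda>\<mu>. g \<mu> - \<mu>"]) auto
qed

lemma add_two_le_of_square_bound:
  fixes s m n :: nat
  assumes "2 * m + s * (s + 1) \<le> n * (n + 1)" "2 * s + 1 \<le> m" "1 \<le> s"
  shows "s + 2 \<le> n"
proof (rule ccontr)
  assume "\<not> s + 2 \<le> n"
  then have "n * (n + 1) \<le> (s + 1) * (s + 2)"
    by (intro mult_mono) auto
  moreover have "(s + 1) * (s + 2) = s * (s + 1) + 2 * s + 2"
    by (simp add: algebra_simps)
  ultimately show False
    using assms by linarith
qed

lemma small_sum_of_pair_excesses:
  fixes d :: "nat \<Rightarrow> nat"
  assumes d: "\<And>\<mu>. \<mu> \<in> {1..s} \<Longrightarrow> d \<mu> = 0 \<or> d \<mu> = m - 2 * \<mu> \<or> d \<mu> = m - \<mu>"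
    and "2 * s + 1 \<le> m" "2 < m - s" "1 \<le> s" and small: "(\<Sum>\<mu> = 1..s. d \<mu>) \<le> 2"
  shows "(\<Sum>\<mu> = 1..s. d \<mu>) = 0 \<or> (\<Sum>\<mu> = 1..s. d \<mu>) = m - 2 * s"
proof -
  have d_small: "d \<mu> \<le> 2" if "\<mu> \<in> {1..s}" for \<mu>
    using member_le_sum[of \<mu> "{1..s}" d] that small by simp
  have d_zero: "d \<mu> = 0" if "\<mu> \<in> {1..s} - {s}" for \<mu>
  proof -
    have "2 < m - 2 * \<mu>" "2 < m - \<mu>"
      using that assms(2,3) by auto
    then show ?thesis
      using d[of \<mu>] d_small[of \<mu>] that by auto
  qed
  have "s \<in> {1..s}"
    using assms(4) by simp
  then have "(\<Sum>\<mu> = 1..s. d \<mu>) = d s + (\<Sum>\<mu> \<in> {1..s} - {s}. d \<mu>)"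
    by (simp add: sum.remove)
  also have "(\<Sum>\<mu> \<in> {1..s} - {s}. d \<mu>) = 0"
    using d_zero by simp
  finally show ?thesis
    using d[OF \<open>s \<in> {1..s}\<close>] d_small[OF \<open>s \<in> {1..s}\<close>] assms(3) by auto
qed

text \<open>For m > 2n - 4 the sum m + (1 + ... + s) is already T_n - 1 or T_n - 2, while the
  admissible values of e and of the d \<mu> cannot make up a difference of 1 or 2.\<close>
lemma le_of_tri_eq_pair_decomposition:
  fixes m n e :: nat and d :: "nat \<Rightarrow> nat"
  assumes n: "4 \<le> n" and sum: "m + e + (\<Sum>\<mu> = 1..(m - 1) div 2. \<mu> + d \<mu>) = tri n"
    and e: "e = 0 \<or> 2 * e = m"
    and d: "\<And>\<mu>. \<mu> \<in> {1..(m - 1) div 2} \<Longrightarrow> d \<mu> = 0 \<or> d \<mu> = m - 2 * \<mu> \<or> d \<mu> = m - \<mu>"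
  shows "m \<le> 2 * n - 4"
proof (rule ccontr)
  assume "\<not> m \<le> 2 * n - 4"
  define s where "s = (m - 1) div 2"
  have m: "2 * n - 3 \<le> m" "m \<le> 2 * s + 2" "2 * s + 1 \<le> m"
    using \<open>\<not> m \<le> 2 * n - 4\<close> n unfolding s_def by auto
  have "2 * (\<Sum>\<mu> = 1..s. \<mu>) = s * (s + 1)"
    by (induction s) auto
  moreover have "2 * tri n = n * (n + 1)"
    unfolding tri_def by simp
  ultimately have key: "2 * m + 2 * e + s * (s + 1) + 2 * (\<Sum>\<mu> = 1..s. d \<mu>) = n * (n + 1)"
    using sum unfolding s_def[symmetric] by (simp add: sum.distrib)
  then have "2 * m + s * (s + 1) \<le> n * (n + 1)"
    by linarith
  moreover have "1 \<le> s"
    using m n by linarith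
  ultimately have "s + 2 \<le> n"
    using add_two_le_of_square_bound m(3) by blast
  then have "n = s + 2"
    using m by linarith
  then have "s * (s + 1) + 4 * n = n * (n + 1) + 2"
    by (simp add: algebra_simps)
  then have excess: "e + (\<Sum>\<mu> = 1..s. d \<mu>) = 2 * n - 1 - m"
    using key by linarith
  then have "e = 0" "(\<Sum>\<mu> = 1..s. d \<mu>) \<le> 2"
    using e m n by linarith+
  moreover have "2 < m - s" "1 \<le> s"
    using \<open>n = s + 2\<close> m n by linarith+
  ultimately have "(\<Sum>\<mu> = 1..s. d \<mu>) = 0 \<or> (\<Sum>\<mu> = 1..s. d \<mu>) = m - 2 * s"
    using small_sum_of_pair_excesses[of s d m] d m(3) unfolding s_def by blast
  moreover have "0 < 2 * n - 1 - m"
    using m \<open>n = s + 2\<close> by linarith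
  moreover have "m = 2 * s + 1 \<or> m = 2 * s + 2"
    using m by linarith
  ultimately show False
    using excess \<open>e = 0\<close> \<open>n = s + 2\<close> by auto
qed

lemma Max_le_of_unrefinable_tri:
  assumes lam: "lam \<in> unrefinable_partitions (tri n)" and n: "4 \<le> n"
  shows "Max lam \<le> 2 * n - 4"
proof -
  have facts: "\<not> refinable lam" "finite lam" "0 \<notin> lam" "lam \<noteq> {}" and sum: "\<Sum>lam = tri n"
    using lam unfolding unrefinable_partitions_def distinct_partitions_def by auto
  obtain e d where decomp: "\<Sum>lam = Max lam + e + (\<Sum>\<mu> = 1..(Max lam - 1) div 2. \<mu> + d \<mu>)"
    and "e = 0 \<or> 2 * e = Max lam"
    and "\<And>\<mu>. \<mu> \<in> {1..(Max lam - 1) div 2} \<Longrightarrow>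
      d \<mu> = 0 \<or> d \<mu> = Max lam - 2 * \<mu> \<or> d \<mu> = Max lam - \<mu>"
    using not_refinable_pair_decomposition[OF facts refl] by blast
  moreover have "Max lam + e + (\<Sum>\<mu> = 1..(Max lam - 1) div 2. \<mu> + d \<mu>) = tri n"
    using decomp sum by simp
  ultimately show ?thesis
    using le_of_tri_eq_pair_decomposition[OF n] by blast
qed

lemma maximal_unrefinableI:
  assumes "lam \<in> unrefinable_partitions N"
    and "\<And>\<mu>. \<mu> \<in> unrefinable_partitions N \<Longrightarrow> Max \<mu> \<le> Max lam"
  shows "lam \<in> maximal_unrefinable N"
proof -
  have "finite (unrefinable_partitions N)"
    using finite_distinct_partitions unfolding unrefinable_partitions_def by simp
  then have "Max (Max ` unrefinable_partitions N) = Max lam"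
    using assms by (intro Max_eqI) auto
  then show ?thesis
    using assms(1) unfolding maximal_unrefinable_def by simp
qed

section \<open>First-column hooks of diagrams with Frobenius coordinates (A | A - 1)\<close>

definition frobenius_partition :: "nat \<Rightarrow> nat set \<Rightarrow> nat set" where
  "frobenius_partition c A = (+) c ` A \<union> (\<lambda>x. c - x) ` ({1..c} - A)"

lemma first_column_hooks_eq_frobenius_partition:
  assumes Y: "young_diagram Y" and diag: "\<forall>i\<ge>1. (i,i) \<in> Y \<longleftrightarrow> i \<le> d" and d: "1 \<le> d"
    and arm_leg: "\<forall>i\<in>{1..d}. arm Y i i = leg Y i i + 1"
  shows "first_column_hooks Y = frobenius_partition (arm Y 1 1) ((\<lambda>i. arm Y i i) ` {1..d})"
proof -
  have "(\<lambda>i. leg Y i i + 1) ` {1..d} = (\<lambda>i. arm Y i i) ` {1..d}"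
    using arm_leg by (intro image_cong) auto
  moreover have "arm Y 1 1 = leg Y 1 1 + 1"
    using arm_leg d by simp
  ultimately show ?thesis
    using first_column_hooks_Frobenius[OF Y diag d] unfolding frobenius_partition_def image_image
    by simp
qed

context
  fixes c :: nat and A :: "nat set"
  assumes A: "A \<subseteq> {1..c}" and cA: "c \<in> A"
begin

lemma mem_frobenius_partition:
  "x \<in> frobenius_partition c A \<longleftrightarrow> (c < x \<and> x - c \<in> A) \<or> (0 < x \<and> x < c \<and> c - x \<notin> A)"
proof
  assume "x \<in> frobenius_partition c A"
  then show "(c < x \<and> x - c \<in> A) \<or> (0 < x \<and> x < c \<and> c - x \<notin> A)"
    unfolding frobenius_partition_def using A cA by (auto simp: Diff_iff)
next
  assume "(c < x \<and> x - c \<in> A) \<or> (0 < x \<and> x < c \<and> c - x \<notin> A)"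
  then have "x = c + (x - c) \<and> x - c \<in> A \<or> x = c - (c - x) \<and> c - x \<in> {1..c} - A"
    by auto
  then show "x \<in> frobenius_partition c A"
    unfolding frobenius_partition_def by blast
qed

lemma frobenius_partition_subset: "frobenius_partition c A \<subseteq> {1..2 * c}"
  using A by (fastforce simp: mem_frobenius_partition)

lemma Max_frobenius_partition: "Max (frobenius_partition c A) = 2 * c"
  using frobenius_partition_subset cA A
  by (intro Max_eqI) (auto simp: mem_frobenius_partition intro: finite_subset)

lemma card_frobenius_partition: "card (frobenius_partition c A) = c"
proof -
  have fin: "finite A"
    using A finite_subset by blast
  have "inj_on (\<lambda>x. c - x) ({1..c} - A)"
    by (rule inj_onI) auto
  then have "card ((\<lambda>x. c - x) ` ({1..c} - A)) = c - card A"
    using A by (simp add: card_image card_Diff_subset fin)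
  moreover have "(+) c ` A \<inter> (\<lambda>x. c - x) ` ({1..c} - A) = {}"
    using A by auto
  moreover have "card A \<le> c"
    using card_mono[OF _ A] by simp
  ultimately show ?thesis
    unfolding frobenius_partition_def using fin by (simp add: card_Un_disjoint card_image)
qed

lemma card_missing_parts_frobenius_partition:
  "card (missing_parts (frobenius_partition c A)) = c"
  using frobenius_partition_subset card_frobenius_partition
  by (simp add: missing_parts_def Max_frobenius_partition card_Diff_subset finite_subset)

lemma sum_frobenius_partition:
  "2 * \<Sum>(frobenius_partition c A) = c * (c - 1) + 4 * \<Sum>A"
proof -
  have fin: "finite A"
    using A finite_subset by blast
  have "\<Sum>((+) c ` A) = c * card A + \<Sum>A"
    by (simp add: sum.reindex sum.distrib)
  moreover have "\<Sum>((\<lambda>x. c - x) ` ({1..c} - A)) + \<Sum>{1..c} = c * (c - card A) + \<Sum>A"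
  proof -
    have "inj_on (\<lambda>x. c - x) ({1..c} - A)"
      by (rule inj_onI) auto
    then have "\<Sum>((\<lambda>x. c - x) ` ({1..c} - A)) = (\<Sum>x\<in>{1..c} - A. c - x)"
      by (simp add: sum.reindex)
    moreover have "(\<Sum>x\<in>{1..c} - A. c - x) + \<Sum>({1..c} - A) = c * (c - card A)"
      using A by (simp add: sum.distrib[symmetric] card_Diff_subset fin)
    moreover have "\<Sum>({1..c} - A) + \<Sum>A = \<Sum>{1..c}"
      using sum.subset_diff[OF A, of "\<lambda>x. x"] by simp
    ultimately show ?thesis
      by linarith
  qed
  moreover have "(+) c ` A \<inter> (\<lambda>x. c - x) ` ({1..c} - A) = {}"
    using A by auto
  moreover have "2 * \<Sum>{1..c} = c * (c + 1)"
    by (induction c) auto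
  moreover have "c * (c - card A) + c * card A = c * c"
    using card_mono[OF _ A] by (simp add: diff_mult_distrib2)
  moreover have "c * (c - 1) + c * (c + 1) = 2 * (c * c)"
    by (cases c) (simp_all add: algebra_simps)
  ultimately show ?thesis
    unfolding frobenius_partition_def using fin by (simp add: sum.union_disjoint)
qed

end

context
  fixes E :: "nat set" and k c :: nat
  assumes E: "E \<in> distinct_partitions k" and k: "4 \<le> k" and c: "c = 2 * k - 3"
begin

lemma insert_distinct_partition_subset: "insert c E \<subseteq> {1..c}"
proof -
  have "0 < e \<and> e \<le> c" if "e \<in> E" for e
    using distinct_partition_pos[OF E that] part_lt_distinct_partition[OF E that] c k by simp
  then show ?thesis
    using c k by (auto simp: Suc_le_eq)
qed

lemma mem_frobenius_partition_insert:
  "x \<in> frobenius_partition c (insert c E) \<longleftrightarrow>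
    x = 2 * c \<or> (c < x \<and> x - c \<in> E) \<or> (0 < x \<and> x < c \<and> c - x \<notin> E)"
  unfolding mem_frobenius_partition[OF insert_distinct_partition_subset insertI1] using c k by auto

lemma mem_missing_parts_frobenius_partition_insert:
  "x \<in> missing_parts (frobenius_partition c (insert c E)) \<longleftrightarrow>
    0 < x \<and> x < 2 * c \<and> x \<notin> frobenius_partition c (insert c E)"
  using mem_frobenius_partition_insert[of "2 * c"]
  unfolding missing_parts_def Max_frobenius_partition[OF insert_distinct_partition_subset insertI1]
  by (cases "x = 2 * c") auto

lemma low_add_low_missing_not_mem:
  assumes ne: "E \<noteq> {3, k - 3}" and e: "e \<in> E" "e' \<in> E" "e \<noteq> e'"
  shows "(c - e) + (c - e') \<notin> frobenius_partition c (insert c E)"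
proof
  assume "(c - e) + (c - e') \<in> frobenius_partition c (insert c E)"
  have "e + e' \<le> k"
    using add_le_distinct_partition[OF E e] .
  moreover have "0 < e" "e < k" "e' < k"
    using distinct_partition_pos[OF E] part_lt_distinct_partition[OF E] e by auto
  ultimately have "(c - e) + (c - e') = c + (c - e - e')" "c - e - e' < c"
    using c k by auto
  with \<open>(c - e) + (c - e') \<in> frobenius_partition c (insert c E)\<close>
  have e'': "c - e - e' \<in> E"
    by (auto simp: mem_frobenius_partition_insert)
  show False
  proof (cases "c - e - e' = e \<or> c - e - e' = e'")
    case True
    then have "2 * e + e' = 2 * k - 3 \<or> 2 * e' + e = 2 * k - 3"
      using \<open>e + e' \<le> k\<close> c k by auto
    then show False
      using double_add_eq_imp_eq_3_k_minus_3[OF E k] e ne by metis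
  next
    case False
    then have "e + e' + (c - e - e') \<le> k"
      using add3_le_distinct_partition[OF E e(1,2) e''] e(3) by auto
    then show False
      using \<open>e + e' \<le> k\<close> c k by linarith
  qed
qed

lemma low_missing_add_c_not_mem:
  assumes e: "e \<in> E"
  shows "(c - e) + c \<notin> frobenius_partition c (insert c E)"
proof
  assume mem: "(c - e) + c \<in> frobenius_partition c (insert c E)"
  have "0 < e" "e < k"
    using distinct_partition_pos[OF E e] part_lt_distinct_partition[OF E e] .
  then have "c - e < c"
    using c k by auto
  with mem \<open>0 < e\<close> have "c - e \<in> E"
    unfolding add.commute[of "c - e"] by (auto simp: mem_frobenius_partition_insert)
  moreover have "e \<noteq> c - e"
  proof
    assume "e = c - e"
    then have "c = 2 * e"
      using \<open>e < k\<close> c k by linarith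
    then show False
      using c k by presburger
  qed
  ultimately have "e + (c - e) \<le> k"
    by (rule add_le_distinct_partition[OF E e])
  then show False
    using \<open>e < k\<close> c k by linarith
qed

lemma low_add_high_missing_not_mem:
  assumes e: "e \<in> E" and f: "0 < f" "f \<notin> E"
  shows "(c - e) + (c + f) \<notin> frobenius_partition c (insert c E)"
proof
  assume mem: "(c - e) + (c + f) \<in> frobenius_partition c (insert c E)"
  have "0 < e" "e < k"
    using distinct_partition_pos[OF E e] part_lt_distinct_partition[OF E e] .
  have "(c - e) + (c + f) \<le> 2 * c"
    using mem frobenius_partition_subset[OF insert_distinct_partition_subset insertI1] by auto
  moreover have "f \<noteq> e"
    using e f by auto
  ultimately have "f < e"
    using \<open>e < k\<close> c k by linarith
  then have "(c - e) + (c + f) = c + (c - e + f)" "c - e + f < c"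
    using \<open>e < k\<close> c k by auto
  with mem have e'': "c - e + f \<in> E"
    by (auto simp: mem_frobenius_partition_insert)
  show False
  proof (cases "c - e + f = e")
    case True
    then have "f = 1" "e = k - 1"
      using \<open>e < k\<close> f c k by linarith+
    then show False
      using pred_mem_imp_one_mem_distinct_partition[OF E] e f by simp
  next
    case False
    then show False
      using add_le_distinct_partition[OF E e'' e False] \<open>f < e\<close> \<open>e < k\<close> c k by linarith
  qed
qed

lemma not_refinable_frobenius_partition:
  assumes ne: "E \<noteq> {3, k - 3}"
  shows "\<not> refinable (frobenius_partition c (insert c E))"
proof
  let ?lam = "frobenius_partition c (insert c E)"
  assume "refinable ?lam"
  then obtain \<mu> \<mu>' where missing: "\<mu> \<in> missing_parts ?lam" "\<mu>' \<in> missing_parts ?lam"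
    and "\<mu> < \<mu>'" and sum_mem: "\<mu> + \<mu>' \<in> ?lam"
    unfolding refinable_def by blast
  have "\<mu> < c"
    using sum_mem frobenius_partition_subset[OF insert_distinct_partition_subset insertI1] \<open>\<mu> < \<mu>'\<close>
    by auto
  then obtain e where e: "e \<in> E" "\<mu> = c - e"
    using missing(1) unfolding mem_missing_parts_frobenius_partition_insert
      mem_frobenius_partition_insert by auto
  consider "\<mu>' < c" | "\<mu>' = c" | "c < \<mu>'"
    by linarith
  then show False
  proof cases
    case 1
    then obtain e' where e': "e' \<in> E" "\<mu>' = c - e'"
      using missing(2) unfolding mem_missing_parts_frobenius_partition_insert
        mem_frobenius_partition_insert by auto
    then have "e \<noteq> e'"
      using e \<open>\<mu> < \<mu>'\<close> by auto
    then show False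
      using low_add_low_missing_not_mem[OF ne e(1) e'(1)] sum_mem e e' by simp
  next
    case 2
    then show False
      using low_missing_add_c_not_mem[OF e(1)] sum_mem e by simp
  next
    case 3
    then have "0 < \<mu>' - c" "\<mu>' - c \<notin> E" "\<mu>' = c + (\<mu>' - c)"
      using missing(2) unfolding mem_missing_parts_frobenius_partition_insert
        mem_frobenius_partition_insert by auto
    then show False
      using low_add_high_missing_not_mem[OF e(1), of "\<mu>' - c"] sum_mem e by simp
  qed
qed

lemma frobenius_partition_mem_distinct_partitions:
  "frobenius_partition c (insert c E) \<in> distinct_partitions (tri (2 * k - 1))"
proof -
  note A = insert_distinct_partition_subset
  have "c \<notin> E"
    using part_lt_distinct_partition[OF E, of c] c k by auto
  moreover have "finite E" "\<Sum>E = k"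
    using E unfolding distinct_partitions_def by auto
  ultimately have "2 * \<Sum>(frobenius_partition c (insert c E)) = c * (c - 1) + 4 * (c + k)"
    using sum_frobenius_partition[OF A insertI1] by simp
  also have "\<dots> = 2 * tri (2 * k - 1)"
  proof -
    define j where "j = k - 4"
    then have "k = j + 4" "c = 2 * j + 5"
      using k c by simp_all
    moreover have "2 * tri (2 * k - 1) = (2 * k - 1) * (2 * k)"
      unfolding tri_def using k by simp
    ultimately show ?thesis
      by (simp add: algebra_simps)
  qed
  finally show ?thesis
    using frobenius_partition_subset[OF A insertI1] card_frobenius_partition[OF A insertI1] c k
    unfolding distinct_partitions_def by (auto intro: finite_subset)
qed

lemma frobenius_partition_mem_maximal_unrefinable_bar:
  assumes ne: "E \<noteq> {3, k - 3}"
  shows "frobenius_partition c (insert c E) \<in> maximal_unrefinable_bar (tri (2 * k - 1))"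
proof -
  note A = insert_distinct_partition_subset
  have "frobenius_partition c (insert c E) \<in> maximal_unrefinable (tri (2 * k - 1))"
  proof (rule maximal_unrefinableI)
    show "frobenius_partition c (insert c E) \<in> unrefinable_partitions (tri (2 * k - 1))"
      using frobenius_partition_mem_distinct_partitions not_refinable_frobenius_partition[OF ne]
      unfolding unrefinable_partitions_def by simp
    have "4 \<le> 2 * k - 1"
      using k by simp
    then show "Max \<mu> \<le> Max (frobenius_partition c (insert c E))"
      if "\<mu> \<in> unrefinable_partitions (tri (2 * k - 1))" for \<mu>
      using Max_le_of_unrefinable_tri[OF that] Max_frobenius_partition[OF A insertI1] c k by simp
  qed
  then show ?thesis
    using card_missing_parts_frobenius_partition[OF A insertI1] Max_frobenius_partition[OF A insertI1]
    unfolding maximal_unrefinable_bar_def by simp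
qed

end

lemma image_reversed_nth_sorted_list_of_set:
  assumes "finite A"
  shows "(\<lambda>i. sorted_list_of_set A ! (card A - (i - 2) - 1)) ` {2..card A + 1} = A"
proof -
  have "(\<lambda>i. card A - (i - 2) - 1) ` {2..card A + 1} = {..<card A}"
  proof (intro set_eqI iffI)
    fix t assume "t \<in> {..<card A}"
    then have "t = card A - (card A + 1 - t - 2) - 1" "card A + 1 - t \<in> {2..card A + 1}"
      by auto
    then show "t \<in> (\<lambda>i. card A - (i - 2) - 1) ` {2..card A + 1}"
      by blast
  qed auto
  then have "(\<lambda>i. sorted_list_of_set A ! (card A - (i - 2) - 1)) ` {2..card A + 1} =
      (\<lambda>t. sorted_list_of_set A ! t) ` {..<length (sorted_list_of_set A)}"
    by (simp add: image_image[symmetric] del: image_image)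
  also have "\<dots> = set (sorted_list_of_set A)"
    by (auto simp: in_set_conv_nth)
  also have "\<dots> = A"
    using assms by simp
  finally show ?thesis .
qed

theorem theorem3p26:
  fixes k n :: nat and eta :: "nat set" and Y :: "(nat \<times> nat) set"
  assumes k4: "k \<ge> 4"
    and n_def: "n = 2 * k - 1"
    and eta_D: "eta \<in> distinct_partitions k"
    and eta_ne: "eta \<noteq> {3, k - 3}"
    and Y_young: "young_diagram Y"
    and diag: "\<forall>i\<ge>1. (i,i) \<in> Y \<longleftrightarrow> i \<le> card eta + 1"
    and h11: "hook Y 1 1 = 2 * n - 4"
    and hii: "\<forall>i. 2 \<le> i \<and> i \<le> card eta + 1 \<longrightarrow>
               hook Y i i = 2 * (sorted_list_of_set eta ! (card eta - (i - 2) - 1))"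
    and armleg: "\<forall>i. 1 \<le> i \<and> i \<le> card eta + 1 \<longrightarrow> arm Y i i = leg Y i i + 1"
  shows "\<not> refinable (first_column_hooks Y) \<and>
         first_column_hooks Y \<in> maximal_unrefinable_bar (tri n)"
proof -
  define c where "c = 2 * k - 3"
  have arm_leg: "\<forall>i\<in>{1..card eta + 1}. arm Y i i = leg Y i i + 1"
    using armleg by auto
  then have hook_diag: "hook Y i i = 2 * arm Y i i" if "i \<in> {1..card eta + 1}" for i
    using that unfolding hook_def by auto
  have "arm Y 1 1 = c"
    using hook_diag[of 1] h11 n_def k4 unfolding c_def by simp
  moreover have "(\<lambda>i. arm Y i i) ` {2..card eta + 1} = eta"
    using image_reversed_nth_sorted_list_of_set[of eta] eta_D hii hook_diag
    unfolding distinct_partitions_def by (auto intro!: image_cong)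
  moreover have "{1..card eta + 1} = insert 1 {2..card eta + 1}"
    by auto
  ultimately have "first_column_hooks Y = frobenius_partition c (insert c eta)"
    using first_column_hooks_eq_frobenius_partition[OF Y_young diag _ arm_leg] by simp
  then show ?thesis
    using not_refinable_frobenius_partition[OF eta_D k4 c_def eta_ne]
      frobenius_partition_mem_maximal_unrefinable_bar[OF eta_D k4 c_def eta_ne] n_def
    by simp
qed

end
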